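(* Let $(H,B_1,B_2)$ be a Rota-Baxter system of Hopf algebras with descendent Hopf algebra $H_{B_1,B_2}$ and let $A$ be a unital commutative algebra. Then the maps $\mathcal{B}_1,\mathcal{B}_2:\mathrm{Char}(H,A)\to\mathrm{Char}(H_{B_1,B_2},A)$, $\mathcal{B}_i(f)(a)=f(B_i(a))$ for $a\in H_1$, are group homomorphisms.
   Context: $\mathbb{F}$ is a field of characteristic $0$; Sweedler notation $\Delta(a)=a_1\otimes a_2$. A Rota-Baxter system of Hopf algebras is a triple $(H,B_1,B_2)$ with $(H,\cdot,1,\Delta,\epsilon,S)$ a cocommutative Hopf algebra, $B_1,B_2$ coalgebra homomorphisms with $B_1(1)=B_2(1)=1$, and for all $a,b\in H$: $B_1(a)B_1(b)=B_1(B_1(a_1)bS(B_2(a_2)))$, $B_2(a)B_2(b)=B_2(B_1(a_1)bS(B_2(a_2)))$. Descendent operation $a\circ b=B_1(a_1)bS(B_2(a_2))$, cocycle $\sigma(a)=B_1(a_1)S(B_2(a_2))$, $H_1=\operatorname{Im}(\sigma)$; $H_{B_1,B_2}$ is the Hopf algebra $H_1$ with product $\circ$, unit $1$, restricted $\Delta,\epsilon$, antipode $T(a)=S(B_1(a_1))B_2(a_2)$. Convolution: $(f\ast g)(a)=f(a_1)g(a_2)$. $\mathrm{Char}(H,A)$ is the group under $\ast$ of algebra homomorphisms $H\to A$; $\mathrm{Char}(H_{B_1,B_2},A)$ is the group under convolution (w.r.t. the coproduct of $H_1$) of algebra homomorphisms $(H_1,\circ,1)\to A$. *)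

theory Defs
  imports Complex_Main "HOL-Algebra.Group"
begin

text \<open>
Tensors in H (x) H are represented by finite lists of pairs (sum of x (x) y), and two
such lists denote the same tensor iff every bilinear functional H x H -> k takes the
same value on them (over a field this is exactly equality in H (x) H).  Similarly for
H (x) H (x) H with trilinear functionals.
\<close>

definition bilin_fun :: "('k::field \<Rightarrow> 'h::ab_group_add \<Rightarrow> 'h) \<Rightarrow> ('h \<Rightarrow> 'h \<Rightarrow> 'k) \<Rightarrow> bool" where
  "bilin_fun sH \<phi> \<longleftrightarrow>
     (\<forall>y. Vector_Spaces.linear sH (*) (\<lambda>x. \<phi> x y)) \<and> (\<forall>x. Vector_Spaces.linear sH (*) (\<phi> x))"

definition trilin_fun :: "('k::field \<Rightarrow> 'h::ab_group_add \<Rightarrow> 'h) \<Rightarrow> ('h \<Rightarrow> 'h \<Rightarrow> 'h \<Rightarrow> 'k) \<Rightarrow> bool" where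
  "trilin_fun sH \<phi> \<longleftrightarrow>
     (\<forall>y z. Vector_Spaces.linear sH (*) (\<lambda>x. \<phi> x y z)) \<and>
     (\<forall>x z. Vector_Spaces.linear sH (*) (\<lambda>y. \<phi> x y z)) \<and>
     (\<forall>x y. Vector_Spaces.linear sH (*) (\<lambda>z. \<phi> x y z))"

definition teq2 :: "('k::field \<Rightarrow> 'h::ab_group_add \<Rightarrow> 'h) \<Rightarrow> ('h \<times> 'h) list \<Rightarrow> ('h \<times> 'h) list \<Rightarrow> bool" where
  "teq2 sH T U \<longleftrightarrow> (\<forall>\<phi>. bilin_fun sH \<phi> \<longrightarrow>
      sum_list (map (\<lambda>(x, y). \<phi> x y) T) = sum_list (map (\<lambda>(x, y). \<phi> x y) U))"

definition teq3 :: "('k::field \<Rightarrow> 'h::ab_group_add \<Rightarrow> 'h) \<Rightarrow> ('h \<times> 'h \<times> 'h) list \<Rightarrow> ('h \<times> 'h \<times> 'h) list \<Rightarrow> bool" where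
  "teq3 sH T U \<longleftrightarrow> (\<forall>\<phi>. trilin_fun sH \<phi> \<longrightarrow>
      sum_list (map (\<lambda>(x, y, z). \<phi> x y z) T) = sum_list (map (\<lambda>(x, y, z). \<phi> x y z) U))"

definition tmult :: "('h::times \<times> 'h) list \<Rightarrow> ('h \<times> 'h) list \<Rightarrow> ('h \<times> 'h) list" where
  "tmult T U = concat (map (\<lambda>(x, y). map (\<lambda>(x', y'). (x * x', y * y')) U) T)"

definition k_algebra :: "('k::field \<Rightarrow> 'r::ring_1 \<Rightarrow> 'r) \<Rightarrow> bool" where
  "k_algebra s \<longleftrightarrow> vector_space s \<and>
     (\<forall>c x y. s c (x * y) = s c x * y \<and> s c (x * y) = x * s c y)"

definition cocomm_hopf_algebra ::
  "('k::field \<Rightarrow> 'h::ring_1 \<Rightarrow> 'h) \<Rightarrow> ('h \<Rightarrow> ('h \<times> 'h) list) \<Rightarrow> ('h \<Rightarrow> 'k) \<Rightarrow> ('h \<Rightarrow> 'h) \<Rightarrow> bool" where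
  "cocomm_hopf_algebra sH \<Delta> \<epsilon> S \<longleftrightarrow>
     k_algebra sH \<and>
     \<comment> \<open>Delta is linear\<close>
     (\<forall>a b. teq2 sH (\<Delta> (a + b)) (\<Delta> a @ \<Delta> b)) \<and>
     (\<forall>c a. teq2 sH (\<Delta> (sH c a)) (map (\<lambda>(x, y). (sH c x, y)) (\<Delta> a))) \<and>
     \<comment> \<open>coassociativity\<close>
     (\<forall>a. teq3 sH
        (concat (map (\<lambda>(x, y). map (\<lambda>(x1, x2). (x1, x2, y)) (\<Delta> x)) (\<Delta> a)))
        (concat (map (\<lambda>(x, y). map (\<lambda>(y1, y2). (x, y1, y2)) (\<Delta> y)) (\<Delta> a)))) \<and>
     \<comment> \<open>counit\<close>
     Vector_Spaces.linear sH (*) \<epsilon> \<and>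
     (\<forall>a. sum_list (map (\<lambda>(x, y). sH (\<epsilon> x) y) (\<Delta> a)) = a) \<and>
     (\<forall>a. sum_list (map (\<lambda>(x, y). sH (\<epsilon> y) x) (\<Delta> a)) = a) \<and>
     \<comment> \<open>Delta and eps are algebra maps\<close>
     (\<forall>a b. teq2 sH (\<Delta> (a * b)) (tmult (\<Delta> a) (\<Delta> b))) \<and>
     teq2 sH (\<Delta> 1) [(1, 1)] \<and>
     (\<forall>a b. \<epsilon> (a * b) = \<epsilon> a * \<epsilon> b) \<and> \<epsilon> 1 = 1 \<and>
     \<comment> \<open>antipode\<close>
     Vector_Spaces.linear sH sH S \<and>
     (\<forall>a. sum_list (map (\<lambda>(x, y). S x * y) (\<Delta> a)) = sH (\<epsilon> a) 1) \<and>
     (\<forall>a. sum_list (map (\<lambda>(x, y). x * S y) (\<Delta> a)) = sH (\<epsilon> a) 1) \<and>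
     \<comment> \<open>cocommutativity\<close>
     (\<forall>a. teq2 sH (\<Delta> a) (map (\<lambda>(x, y). (y, x)) (\<Delta> a)))"

definition coalg_hom ::
  "('k::field \<Rightarrow> 'h::ring_1 \<Rightarrow> 'h) \<Rightarrow> ('h \<Rightarrow> ('h \<times> 'h) list) \<Rightarrow> ('h \<Rightarrow> 'k) \<Rightarrow> ('h \<Rightarrow> 'h) \<Rightarrow> bool" where
  "coalg_hom sH \<Delta> \<epsilon> B \<longleftrightarrow>
     Vector_Spaces.linear sH sH B \<and>
     (\<forall>a. teq2 sH (\<Delta> (B a)) (map (\<lambda>(x, y). (B x, B y)) (\<Delta> a))) \<and>
     (\<forall>a. \<epsilon> (B a) = \<epsilon> a)"

definition desc_op :: "('h \<Rightarrow> ('h \<times> 'h) list) \<Rightarrow> ('h \<Rightarrow> 'h) \<Rightarrow> ('h \<Rightarrow> 'h) \<Rightarrow> ('h \<Rightarrow> 'h)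
     \<Rightarrow> 'h::ring_1 \<Rightarrow> 'h \<Rightarrow> 'h" where
  "desc_op \<Delta> S B1 B2 a b = sum_list (map (\<lambda>(x, y). B1 x * b * S (B2 y)) (\<Delta> a))"

definition cocycle :: "('h \<Rightarrow> ('h \<times> 'h) list) \<Rightarrow> ('h \<Rightarrow> 'h) \<Rightarrow> ('h \<Rightarrow> 'h) \<Rightarrow> ('h \<Rightarrow> 'h)
     \<Rightarrow> 'h::ring_1 \<Rightarrow> 'h" where
  "cocycle \<Delta> S B1 B2 a = sum_list (map (\<lambda>(x, y). B1 x * S (B2 y)) (\<Delta> a))"

definition H1 :: "('h \<Rightarrow> ('h \<times> 'h) list) \<Rightarrow> ('h \<Rightarrow> 'h) \<Rightarrow> ('h \<Rightarrow> 'h) \<Rightarrow> ('h \<Rightarrow> 'h) \<Rightarrow> 'h::ring_1 set" where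
  "H1 \<Delta> S B1 B2 = range (cocycle \<Delta> S B1 B2)"

definition rota_baxter_system ::
  "('k::field_char_0 \<Rightarrow> 'h::ring_1 \<Rightarrow> 'h) \<Rightarrow> ('h \<Rightarrow> ('h \<times> 'h) list) \<Rightarrow> ('h \<Rightarrow> 'k) \<Rightarrow> ('h \<Rightarrow> 'h)
     \<Rightarrow> ('h \<Rightarrow> 'h) \<Rightarrow> ('h \<Rightarrow> 'h) \<Rightarrow> bool" where
  "rota_baxter_system sH \<Delta> \<epsilon> S B1 B2 \<longleftrightarrow>
     cocomm_hopf_algebra sH \<Delta> \<epsilon> S \<and>
     coalg_hom sH \<Delta> \<epsilon> B1 \<and> coalg_hom sH \<Delta> \<epsilon> B2 \<and> B1 1 = 1 \<and> B2 1 = 1 \<and>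
     (\<forall>a b. B1 a * B1 b = B1 (desc_op \<Delta> S B1 B2 a b)) \<and>
     (\<forall>a b. B2 a * B2 b = B2 (desc_op \<Delta> S B1 B2 a b))"

definition comm_k_algebra :: "('k::field \<Rightarrow> 'a::comm_ring_1 \<Rightarrow> 'a) \<Rightarrow> bool" where
  "comm_k_algebra sA \<longleftrightarrow> k_algebra sA"

definition conv :: "('h \<Rightarrow> ('h \<times> 'h) list) \<Rightarrow> ('h \<Rightarrow> 'a::comm_ring_1) \<Rightarrow> ('h \<Rightarrow> 'a) \<Rightarrow> 'h \<Rightarrow> 'a" where
  "conv \<Delta> f g a = sum_list (map (\<lambda>(x, y). f x * g y) (\<Delta> a))"

definition CharH ::
  "('k::field \<Rightarrow> 'h::ring_1 \<Rightarrow> 'h) \<Rightarrow> ('h \<Rightarrow> ('h \<times> 'h) list) \<Rightarrow> ('h \<Rightarrow> 'k)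
     \<Rightarrow> ('k \<Rightarrow> 'a::comm_ring_1 \<Rightarrow> 'a) \<Rightarrow> ('h \<Rightarrow> 'a) monoid" where
  "CharH sH \<Delta> \<epsilon> sA =
     \<lparr> carrier = {f. Vector_Spaces.linear sH sA f \<and> (\<forall>a b. f (a * b) = f a * f b) \<and> f 1 = 1},
       mult = conv \<Delta>,
       one = (\<lambda>a. sA (\<epsilon> a) 1) \<rparr>"

text \<open>Char(H_{B1,B2},A): algebra homomorphisms (H1, o, 1) -> A, represented as functions
  on H that are extensional (undefined) outside H1.  Convolution uses the coproduct of H1,
  i.e. Delta a written as a tensor with both legs in H1.\<close>
definition convB ::
  "('k::field \<Rightarrow> 'h::ring_1 \<Rightarrow> 'h) \<Rightarrow> ('h \<Rightarrow> ('h \<times> 'h) list) \<Rightarrow> ('h \<Rightarrow> 'h) \<Rightarrow> ('h \<Rightarrow> 'h) \<Rightarrow> ('h \<Rightarrow> 'h)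
     \<Rightarrow> ('h \<Rightarrow> 'a::comm_ring_1) \<Rightarrow> ('h \<Rightarrow> 'a) \<Rightarrow> 'h \<Rightarrow> 'a" where
  "convB sH \<Delta> S B1 B2 f g = restrict (\<lambda>a. SOME v. \<exists>T.
       set T \<subseteq> H1 \<Delta> S B1 B2 \<times> H1 \<Delta> S B1 B2 \<and> teq2 sH T (\<Delta> a) \<and>
       v = sum_list (map (\<lambda>(x, y). f x * g y) T)) (H1 \<Delta> S B1 B2)"

definition CharHB ::
  "('k::field \<Rightarrow> 'h::ring_1 \<Rightarrow> 'h) \<Rightarrow> ('h \<Rightarrow> ('h \<times> 'h) list) \<Rightarrow> ('h \<Rightarrow> 'k) \<Rightarrow> ('h \<Rightarrow> 'h)
     \<Rightarrow> ('h \<Rightarrow> 'h) \<Rightarrow> ('h \<Rightarrow> 'h) \<Rightarrow> ('k \<Rightarrow> 'a::comm_ring_1 \<Rightarrow> 'a) \<Rightarrow> ('h \<Rightarrow> 'a) monoid" where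
  "CharHB sH \<Delta> \<epsilon> S B1 B2 sA =
     \<lparr> carrier = {f. f \<in> extensional (H1 \<Delta> S B1 B2) \<and>
         (\<forall>x\<in>H1 \<Delta> S B1 B2. \<forall>y\<in>H1 \<Delta> S B1 B2. f (x + y) = f x + f y) \<and>
         (\<forall>c. \<forall>x\<in>H1 \<Delta> S B1 B2. f (sH c x) = sA c (f x)) \<and>
         (\<forall>x\<in>H1 \<Delta> S B1 B2. \<forall>y\<in>H1 \<Delta> S B1 B2. f (desc_op \<Delta> S B1 B2 x y) = f x * f y) \<and>
         f 1 = 1},
       mult = convB sH \<Delta> S B1 B2,
       one = restrict (\<lambda>a. sA (\<epsilon> a) 1) (H1 \<Delta> S B1 B2) \<rparr>"

definition BChar :: "('h \<Rightarrow> ('h \<times> 'h) list) \<Rightarrow> ('h \<Rightarrow> 'h) \<Rightarrow> ('h \<Rightarrow> 'h) \<Rightarrow> ('h \<Rightarrow> 'h)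
     \<Rightarrow> ('h \<Rightarrow> 'h) \<Rightarrow> ('h::ring_1 \<Rightarrow> 'a) \<Rightarrow> 'h \<Rightarrow> 'a" where
  "BChar \<Delta> S B1 B2 B f = restrict (\<lambda>a. f (B a)) (H1 \<Delta> S B1 B2)"

end

theory Submission
  imports Defs
begin

text \<open>
Identities in a vector space are checked on linear functionals, so every tensor identity
becomes an identity of scalar Sweedler sums F(a1, a2) with F bilinear.  In the cocommutative
Hopf algebra H the antipode S is an algebra anti-homomorphism and a coalgebra map, and the two
middle legs of a fourfold coproduct may be swapped; with the Rota-Baxter identities this gives
  Delta(a o c) = (a1 o c1) (x) (a2 o c2),   Delta(sigma a) = sigma(a1) (x) sigma(a2),
  sigma(a) o c = a o c,   a o sigma(b) = sigma(a o b).
Hence H1 is closed under o and Delta of an element of H1 has a representative with both legs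
in H1.  Since B_i is a coalgebra map with B_i(a o b) = B_i(a) B_i(b), precomposition with B_i
sends characters of H to characters of H_{B1,B2} and convolution to convolution.
\<close>

lemma (in vector_space) eq_if_linear_functionals_eq:
  assumes "\<And>l. Vector_Spaces.linear scale (*) l \<Longrightarrow> l u = l v"
  shows "u = v"
proof (rule ccontr)
  assume "u \<noteq> v"
  then have ind: "independent {u - v}" by simp
  define B where "B = extend_basis {u - v}"
  have B: "independent B" "span B = UNIV" "u - v \<in> B"
    using independent_extend_basis[OF ind] span_extend_basis[OF ind] extend_basis_superset[OF ind]
    by (auto simp: B_def)
  define l where "l = (\<lambda>x. representation B x (u - v))"
  have lin: "Vector_Spaces.linear scale (*) l"
    using linear_representation[OF B(1,2)] by (simp add: l_def)
  have "l (u - v) = 1"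
    using representation_basis[OF B(1,3)] by (simp add: l_def)
  moreover have "l (u - v) + l v = l u"
    using lin by (metis Vector_Spaces.linear_iff diff_add_cancel)
  ultimately show False using assms[OF lin] by simp
qed

lemma vector_space_field_mult: "vector_space ((*) :: 'k::field \<Rightarrow> 'k \<Rightarrow> 'k)"
  by unfold_locales (auto simp: algebra_simps)

lemma additive_sum_list_pairs:
  fixes l :: "'a::ab_group_add \<Rightarrow> 'b::ab_group_add"
  assumes "\<And>x y. l (x + y) = l x + l y"
  shows "l (sum_list (map (\<lambda>(x, y). G x y) L)) = sum_list (map (\<lambda>(x, y). l (G x y)) L)"
proof -
  have "l 0 = 0" using assms[of 0 0] by simp
  then show ?thesis by (induction L) (auto simp: assms)
qed

lemma sum_list_pairs_map:
  "sum_list (map (\<lambda>(x, y). F x y) (map (\<lambda>(x, y). (g x, h y)) L)) =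
   sum_list (map (\<lambda>(x, y). F (g x) (h y)) L)"
  by (induction L) auto

lemma sum_list_pairs_swap:
  "sum_list (map (\<lambda>(x, y). F x y) (map (\<lambda>(x, y). (y, x)) L)) = sum_list (map (\<lambda>(x, y). F y x) L)"
  by (induction L) auto

lemma sum_list_pairs_tmult:
  "sum_list (map (\<lambda>(x, y). F x y) (tmult T U)) =
   sum_list (map (\<lambda>(x, y). sum_list (map (\<lambda>(u, v). F (x * u) (y * v)) U)) T)"
proof -
  have inner: "sum_list (map (\<lambda>(x, y). F x y) (map (\<lambda>(u, v). (x * u, y * v)) U)) =
      sum_list (map (\<lambda>(u, v). F (x * u) (y * v)) U)" for x y
    by (induction U) auto
  show ?thesis unfolding tmult_def by (induction T) (auto simp: inner simp del: map_map)
qed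

lemma sum_list_triples_assoc_left:
  "sum_list (map (\<lambda>(x, y, z). G x y z) (concat (map (\<lambda>(x, y). map (\<lambda>(x1, x2). (x1, x2, y)) (D x)) L))) =
   sum_list (map (\<lambda>(x, y). sum_list (map (\<lambda>(x1, x2). G x1 x2 y) (D x))) L)"
proof -
  have inner: "sum_list (map (\<lambda>(x, y, z). G x y z) (map (\<lambda>(x1, x2). (x1, x2, y)) M)) =
      sum_list (map (\<lambda>(x1, x2). G x1 x2 y) M)" for y M
    by (induction M) auto
  show ?thesis by (induction L) (auto simp: inner simp del: map_map)
qed

lemma sum_list_triples_assoc_right:
  "sum_list (map (\<lambda>(x, y, z). G x y z) (concat (map (\<lambda>(x, y). map (\<lambda>(y1, y2). (x, y1, y2)) (D y)) L))) =
   sum_list (map (\<lambda>(x, y). sum_list (map (\<lambda>(y1, y2). G x y1 y2) (D y))) L)"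
proof -
  \<comment> \<open>stated with Pair x, the simp normal form of \<lambda>(y1, y2). (x, y1, y2)\<close>
  have inner: "sum_list (map (\<lambda>(x, y, z). G x y z) (map (Pair x) M)) =
      sum_list (map (\<lambda>(y1, y2). G x y1 y2) M)" for x M
    by (induction M) auto
  show ?thesis by (induction L) (auto simp: inner simp del: map_map)
qed

lemma sum_list_pairs_commute:
  "sum_list (map (\<lambda>(x, y). sum_list (map (\<lambda>(u, v). F x y u v) M)) L) =
   sum_list (map (\<lambda>(u, v). sum_list (map (\<lambda>(x, y). (F x y u v :: 'a::comm_monoid_add)) L)) M)"
  by (induction L) (auto simp: split_def sum_list_addf)

locale cocomm_hopf =
  fixes sH :: "'k::field \<Rightarrow> 'h::ring_1 \<Rightarrow> 'h"
    and \<Delta> :: "'h \<Rightarrow> ('h \<times> 'h) list" and \<epsilon> :: "'h \<Rightarrow> 'k" and S :: "'h \<Rightarrow> 'h"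
  assumes hopf: "cocomm_hopf_algebra sH \<Delta> \<epsilon> S"
begin

lemma
  shows k_algebra: "k_algebra sH"
    and coproduct_add: "teq2 sH (\<Delta> (a + b)) (\<Delta> a @ \<Delta> b)"
    and coproduct_scale: "teq2 sH (\<Delta> (sH c a)) (map (\<lambda>(x, y). (sH c x, y)) (\<Delta> a))"
    and coassoc: "teq3 sH
        (concat (map (\<lambda>(x, y). map (\<lambda>(x1, x2). (x1, x2, y)) (\<Delta> x)) (\<Delta> a)))
        (concat (map (\<lambda>(x, y). map (\<lambda>(y1, y2). (x, y1, y2)) (\<Delta> y)) (\<Delta> a)))"
    and counit_left: "sum_list (map (\<lambda>(x, y). sH (\<epsilon> x) y) (\<Delta> a)) = a"
    and counit_right: "sum_list (map (\<lambda>(x, y). sH (\<epsilon> y) x) (\<Delta> a)) = a"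
    and coproduct_mult: "teq2 sH (\<Delta> (a * b)) (tmult (\<Delta> a) (\<Delta> b))"
    and coproduct_one: "teq2 sH (\<Delta> 1) [(1, 1)]"
    and counit_mult: "\<epsilon> (a * b) = \<epsilon> a * \<epsilon> b"
    and counit_one: "\<epsilon> 1 = 1"
    and antipode_linear: "Vector_Spaces.linear sH sH S"
    and antipode_left: "sum_list (map (\<lambda>(x, y). S x * y) (\<Delta> a)) = sH (\<epsilon> a) 1"
    and antipode_right: "sum_list (map (\<lambda>(x, y). x * S y) (\<Delta> a)) = sH (\<epsilon> a) 1"
    and cocomm: "teq2 sH (\<Delta> a) (map (\<lambda>(x, y). (y, x)) (\<Delta> a))"
  using hopf by (simp_all add: cocomm_hopf_algebra_def)

lemma vector_space: "vector_space sH"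
  using k_algebra by (simp add: k_algebra_def)

lemma scale_mult_left: "sH c x * y = sH c (x * y)"
  using k_algebra by (simp add: k_algebra_def)

lemma scale_mult_right: "x * sH c y = sH c (x * y)"
  using k_algebra by (metis k_algebra_def)

definition lin :: "('h \<Rightarrow> 'k) \<Rightarrow> bool" where
  "lin f \<longleftrightarrow> (\<forall>x y. f (x + y) = f x + f y) \<and> (\<forall>c x. f (sH c x) = c * f x)"

definition lin_endo :: "('h \<Rightarrow> 'h) \<Rightarrow> bool" where
  "lin_endo f \<longleftrightarrow> (\<forall>x y. f (x + y) = f x + f y) \<and> (\<forall>c x. f (sH c x) = sH c (f x))"

definition bilin :: "('h \<Rightarrow> 'h \<Rightarrow> 'k) \<Rightarrow> bool" where
  "bilin F \<longleftrightarrow> (\<forall>y. lin (\<lambda>x. F x y)) \<and> (\<forall>x. lin (\<lambda>y. F x y))"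

definition trilin :: "('h \<Rightarrow> 'h \<Rightarrow> 'h \<Rightarrow> 'k) \<Rightarrow> bool" where
  "trilin F \<longleftrightarrow>
     (\<forall>y z. lin (\<lambda>x. F x y z)) \<and> (\<forall>x z. lin (\<lambda>y. F x y z)) \<and> (\<forall>x y. lin (\<lambda>z. F x y z))"

definition quadlin :: "('h \<Rightarrow> 'h \<Rightarrow> 'h \<Rightarrow> 'h \<Rightarrow> 'k) \<Rightarrow> bool" where
  "quadlin F \<longleftrightarrow> (\<forall>y z w. lin (\<lambda>x. F x y z w)) \<and> (\<forall>x z w. lin (\<lambda>y. F x y z w)) \<and>
     (\<forall>x y w. lin (\<lambda>z. F x y z w)) \<and> (\<forall>x y z. lin (\<lambda>w. F x y z w))"

text \<open>sw a F is F(a1, a2) in Sweedler notation; nesting sw gives iterated coproducts.\<close>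

definition sw :: "'h \<Rightarrow> ('h \<Rightarrow> 'h \<Rightarrow> 'k) \<Rightarrow> 'k" where
  "sw a F = sum_list (map (\<lambda>(x, y). F x y) (\<Delta> a))"

lemma lin_iff: "lin f \<longleftrightarrow> Vector_Spaces.linear sH (*) f"
  using vector_space by (simp add: lin_def Vector_Spaces.linear_iff vector_space_field_mult)

lemma lin_endo_iff: "lin_endo f \<longleftrightarrow> Vector_Spaces.linear sH sH f"
  using vector_space by (simp add: lin_endo_def Vector_Spaces.linear_iff)

lemma bilin_fun_iff: "bilin_fun sH F \<longleftrightarrow> bilin F"
  by (simp add: bilin_fun_def bilin_def lin_iff)

lemma trilin_fun_iff: "trilin_fun sH F \<longleftrightarrow> trilin F"
  by (simp add: trilin_fun_def trilin_def lin_iff)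

lemma lin_add: "lin f \<Longrightarrow> f (x + y) = f x + f y"
  and lin_scale: "lin f \<Longrightarrow> f (sH c x) = c * f x"
  and lin_endo_add: "lin_endo g \<Longrightarrow> g (x + y) = g x + g y"
  and lin_endo_scale: "lin_endo g \<Longrightarrow> g (sH c x) = sH c (g x)"
  by (simp_all add: lin_def lin_endo_def)

lemma linI: "(\<And>x y. f (x + y) = f x + f y) \<Longrightarrow> (\<And>c x. f (sH c x) = c * f x) \<Longrightarrow> lin f"
  by (simp add: lin_def)

lemma lin_endoI:
  "(\<And>x y. g (x + y) = g x + g y) \<Longrightarrow> (\<And>c x. g (sH c x) = sH c (g x)) \<Longrightarrow> lin_endo g"
  by (simp add: lin_endo_def)

lemma bilinI: "(\<And>y. lin (\<lambda>x. F x y)) \<Longrightarrow> (\<And>x. lin (\<lambda>y. F x y)) \<Longrightarrow> bilin F"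
  by (simp add: bilin_def)

lemma trilinI: "(\<And>y z. lin (\<lambda>x. F x y z)) \<Longrightarrow> (\<And>x z. lin (\<lambda>y. F x y z)) \<Longrightarrow>
    (\<And>x y. lin (\<lambda>z. F x y z)) \<Longrightarrow> trilin F"
  by (simp add: trilin_def)

lemma quadlinI: "(\<And>y z w. lin (\<lambda>x. F x y z w)) \<Longrightarrow> (\<And>x z w. lin (\<lambda>y. F x y z w)) \<Longrightarrow>
    (\<And>x y w. lin (\<lambda>z. F x y z w)) \<Longrightarrow> (\<And>x y z. lin (\<lambda>w. F x y z w)) \<Longrightarrow> quadlin F"
  by (simp add: quadlin_def)

lemma quadlinD:
  assumes "quadlin F"
  shows "lin (\<lambda>x. F x y z w)" "lin (\<lambda>y. F x y z w)" "lin (\<lambda>z. F x y z w)" "lin (\<lambda>w. F x y z w)"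
  using assms by (simp_all add: quadlin_def)

lemma lin_sum_list:
  "lin f \<Longrightarrow> f (sum_list (map (\<lambda>(x, y). G x y) L)) = sum_list (map (\<lambda>(x, y). f (G x y)) L)"
  by (rule additive_sum_list_pairs) (simp add: lin_add)

lemma lin_endo_id: "lin_endo (\<lambda>x. x)"
  by (simp add: lin_endo_def)

lemma lin_endo_mult_left: "lin_endo g \<Longrightarrow> lin_endo (\<lambda>x. c * g x)"
  by (simp add: lin_endo_def distrib_left scale_mult_right)

lemma lin_endo_mult_right: "lin_endo g \<Longrightarrow> lin_endo (\<lambda>x. g x * c)"
  by (simp add: lin_endo_def distrib_right scale_mult_left)

lemma lin_endo_antipode_comp: "lin_endo g \<Longrightarrow> lin_endo (\<lambda>x. S (g x))"
  using antipode_linear by (simp add: lin_endo_def flip: lin_endo_iff)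

lemma lin_comp: "lin l \<Longrightarrow> lin_endo g \<Longrightarrow> lin (\<lambda>x. l (g x))"
  by (simp add: lin_def lin_endo_def)

lemma lin_bilin_right: "bilin \<phi> \<Longrightarrow> lin_endo g \<Longrightarrow> lin (\<lambda>x. \<phi> c (g x))"
  by (rule lin_comp[of "\<phi> c"]) (simp_all add: bilin_def)

lemma lin_bilin_left: "bilin \<phi> \<Longrightarrow> lin_endo g \<Longrightarrow> lin (\<lambda>x. \<phi> (g x) c)"
  by (rule lin_comp[of "\<lambda>x. \<phi> x c"]) (simp_all add: bilin_def)

lemma teq2_sum_list_eq: "teq2 sH T U \<Longrightarrow> bilin F \<Longrightarrow>
    sum_list (map (\<lambda>(x, y). F x y) T) = sum_list (map (\<lambda>(x, y). F x y) U)"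
  by (simp add: teq2_def flip: bilin_fun_iff)

lemma sw_add: "bilin F \<Longrightarrow> sw (a + b) F = sw a F + sw b F"
  using teq2_sum_list_eq[OF coproduct_add] by (simp add: sw_def)

lemma sw_mult_const: "sw a (\<lambda>x y. c * F x y) = c * sw a F"
  unfolding sw_def by (simp add: split_def sum_list_const_mult)

lemma sw_scale: "bilin F \<Longrightarrow> sw (sH c a) F = c * sw a F"
proof -
  assume F: "bilin F"
  have "sw (sH c a) F = sw a (\<lambda>x y. F (sH c x) y)"
    using teq2_sum_list_eq[OF coproduct_scale F] sum_list_pairs_map[where h = "\<lambda>y. y"] by (simp add: sw_def)
  also have "\<dots> = sw a (\<lambda>x y. c * F x y)"
    using F by (simp add: bilin_def lin_def)
  finally show ?thesis by (simp add: sw_mult_const)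
qed

lemma lin_sw: "bilin F \<Longrightarrow> lin (\<lambda>a. sw a F)"
  by (simp add: linI sw_add sw_scale)

lemma lin_sw_comp: "bilin F \<Longrightarrow> lin_endo g \<Longrightarrow> lin (\<lambda>x. sw (g x) F)"
  by (rule lin_comp[of "\<lambda>a. sw a F"]) (simp_all add: lin_sw)

lemma lin_sw_fun: "(\<And>u v. lin (\<lambda>x. F u v x)) \<Longrightarrow> lin (\<lambda>x. sw a (\<lambda>u v. F u v x))"
  unfolding sw_def by (rule linI) (simp_all add: lin_add lin_scale split_def sum_list_addf sum_list_const_mult)

lemmas lin_rules = lin_sw_fun lin_sw_comp
  lin_endo_id lin_endo_mult_left lin_endo_mult_right lin_endo_antipode_comp

lemma sw_mult: "bilin F \<Longrightarrow> sw (a * b) F = sw a (\<lambda>x y. sw b (\<lambda>u v. F (x * u) (y * v)))"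
  using teq2_sum_list_eq[OF coproduct_mult] unfolding sw_def sum_list_pairs_tmult by simp

lemma sw_one: "bilin F \<Longrightarrow> sw 1 F = F 1 1"
  using teq2_sum_list_eq[OF coproduct_one] by (simp add: sw_def)

lemma sw_cocomm: "bilin F \<Longrightarrow> sw a F = sw a (\<lambda>x y. F y x)"
  using teq2_sum_list_eq[OF cocomm] unfolding sw_def sum_list_pairs_swap by simp

lemma sw_coassoc: "trilin G \<Longrightarrow>
    sw a (\<lambda>x y. sw x (\<lambda>x1 x2. G x1 x2 y)) = sw a (\<lambda>x y. sw y (\<lambda>y1 y2. G x y1 y2))"
  using coassoc[of a]
  unfolding teq3_def trilin_fun_iff sw_def sum_list_triples_assoc_left sum_list_triples_assoc_right
  by blast

lemma sw_coalg_hom: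
  "coalg_hom sH \<Delta> \<epsilon> B \<Longrightarrow> bilin F \<Longrightarrow> sw (B a) F = sw a (\<lambda>x y. F (B x) (B y))"
  using teq2_sum_list_eq[of "\<Delta> (B a)" "map (\<lambda>(x, y). (B x, B y)) (\<Delta> a)" F]
  unfolding coalg_hom_def sw_def sum_list_pairs_map by simp

lemma sw_commute: "sw a (\<lambda>x y. sw b (\<lambda>u v. F x y u v)) = sw b (\<lambda>u v. sw a (\<lambda>x y. F x y u v))"
  unfolding sw_def by (rule sum_list_pairs_commute)

lemma lin_sw_sum: "lin l \<Longrightarrow> l (sum_list (map (\<lambda>(x, y). G x y) (\<Delta> a))) = sw a (\<lambda>x y. l (G x y))"
  by (simp add: sw_def lin_sum_list)

lemma sw_counit_left: "lin g \<Longrightarrow> sw a (\<lambda>x y. \<epsilon> x * g y) = g a"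
  using lin_sw_sum[of g "\<lambda>x y. sH (\<epsilon> x) y" a] by (simp add: counit_left lin_scale)

lemma sw_counit_right: "lin g \<Longrightarrow> sw a (\<lambda>x y. \<epsilon> y * g x) = g a"
  using lin_sw_sum[of g "\<lambda>x y. sH (\<epsilon> y) x" a] by (simp add: counit_right lin_scale)

lemma sw_antipode_left: "lin g \<Longrightarrow> sw a (\<lambda>x y. g (S x * y)) = \<epsilon> a * g 1"
  using lin_sw_sum[of g "\<lambda>x y. S x * y" a] by (simp add: antipode_left lin_scale)

lemma sw_antipode_right: "lin g \<Longrightarrow> sw a (\<lambda>x y. g (x * S y)) = \<epsilon> a * g 1"
  using lin_sw_sum[of g "\<lambda>x y. x * S y" a] by (simp add: antipode_right lin_scale)

lemma sw_coassoc4_outer: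
  assumes "quadlin \<Phi>"
  shows "sw a (\<lambda>x y. sw x (\<lambda>x1 x2. sw y (\<lambda>y1 y2. \<Phi> x1 x2 y1 y2))) =
         sw a (\<lambda>x y. sw y (\<lambda>y1 y2. sw y1 (\<lambda>m1 m2. \<Phi> x m1 m2 y2)))"
proof -
  note \<Phi> = quadlinD[OF assms]
  have "trilin (\<lambda>x1 x2 y. sw y (\<lambda>y1 y2. \<Phi> x1 x2 y1 y2))"
    by (intro trilinI bilinI \<Phi> lin_rules)
  from sw_coassoc[OF this, of a]
  have "sw a (\<lambda>x y. sw x (\<lambda>x1 x2. sw y (\<lambda>y1 y2. \<Phi> x1 x2 y1 y2))) =
        sw a (\<lambda>x y. sw y (\<lambda>y1 y2. sw y2 (\<lambda>z1 z2. \<Phi> x y1 z1 z2)))" by simp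
  moreover have "sw y (\<lambda>y1 y2. sw y2 (\<lambda>z1 z2. \<Phi> x y1 z1 z2)) =
      sw y (\<lambda>y1 y2. sw y1 (\<lambda>m1 m2. \<Phi> x m1 m2 y2))" for x y
  proof -
    have "trilin (\<lambda>m1 m2 v. \<Phi> x m1 m2 v)" by (intro trilinI \<Phi>)
    from sw_coassoc[OF this, of y] show ?thesis by simp
  qed
  ultimately show ?thesis by simp
qed

lemma sw_coassoc4_inner:
  assumes "quadlin \<Phi>"
  shows "sw a (\<lambda>x y. sw x (\<lambda>x1 x2. sw x2 (\<lambda>m1 m2. \<Phi> x1 m1 m2 y))) =
         sw a (\<lambda>x y. sw y (\<lambda>y1 y2. sw y1 (\<lambda>m1 m2. \<Phi> x m1 m2 y2)))"
proof -
  note \<Phi> = quadlinD[OF assms]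
  have "trilin (\<lambda>x1 x2 y. sw x2 (\<lambda>m1 m2. \<Phi> x1 m1 m2 y))" by (intro trilinI bilinI \<Phi> lin_rules)
  from sw_coassoc[OF this, of a] show ?thesis by simp
qed

lemma sw_cocomm_swap_middle:
  assumes "quadlin \<Phi>"
  shows "sw a (\<lambda>x y. sw x (\<lambda>x1 x2. sw y (\<lambda>y1 y2. \<Phi> x1 x2 y1 y2))) =
         sw a (\<lambda>x y. sw x (\<lambda>x1 x2. sw y (\<lambda>y1 y2. \<Phi> x1 y1 x2 y2)))"
proof -
  note \<Phi> = quadlinD[OF assms]
  have swapped: "quadlin (\<lambda>x1 x2 y1 y2. \<Phi> x1 y1 x2 y2)" by (intro quadlinI \<Phi>)
  have "sw y1 (\<lambda>m1 m2. \<Phi> x m1 m2 y2) = sw y1 (\<lambda>m1 m2. \<Phi> x m2 m1 y2)" for x y1 y2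
    by (rule sw_cocomm) (intro bilinI \<Phi>)
  then show ?thesis using sw_coassoc4_outer[OF assms] sw_coassoc4_outer[OF swapped] by simp
qed

lemma eq_if_lin_eq: "(\<And>l. lin l \<Longrightarrow> l u = l v) \<Longrightarrow> u = v"
  by (rule vector_space.eq_if_linear_functionals_eq[OF vector_space]) (simp add: lin_iff)

lemma lin_endo_if_lin_comp: "(\<And>l. lin l \<Longrightarrow> lin (\<lambda>x. l (g x))) \<Longrightarrow> lin_endo g"
proof (rule lin_endoI)
  assume g: "\<And>l. lin l \<Longrightarrow> lin (\<lambda>x. l (g x))"
  fix x y c
  show "g (x + y) = g x + g y"
    by (rule eq_if_lin_eq) (simp add: lin_add[OF g] lin_add)
  show "g (sH c x) = sH c (g x)"
    by (rule eq_if_lin_eq) (simp add: lin_scale[OF g] lin_scale)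
qed

lemma antipode_one: "S 1 = 1"
proof (rule eq_if_lin_eq)
  fix l assume l: "lin l"
  have "bilin (\<lambda>x y. l (S x * y))" by (intro bilinI lin_rules lin_comp[OF l])
  then show "l (S 1) = l 1" using sw_antipode_left[OF l, of 1] sw_one by (simp add: counit_one)
qed

lemma sw_antipode_mult_expand_left:
  assumes l: "lin l"
  shows "sw a (\<lambda>x y. sw x (\<lambda>x1 x2. sw b (\<lambda>u v. sw u (\<lambda>u1 u2.
            l (S u1 * S x1 * (x2 * u2) * S (y * v)))))) = l (S (a * b))"
proof -
  note lc = lin_comp[OF l]
  have "sw x (\<lambda>x1 x2. l (S u1 * S x1 * (x2 * u2) * S (y * v))) = \<epsilon> x * l (S u1 * u2 * S (y * v))"
    for x y u1 u2 v
    using sw_antipode_left[of "\<lambda>h. l (S u1 * h * u2 * S (y * v))" x]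
    by (simp add: mult.assoc lin_rules lc)
  then have "sw x (\<lambda>x1 x2. sw b (\<lambda>u v. sw u (\<lambda>u1 u2. l (S u1 * S x1 * (x2 * u2) * S (y * v))))) =
      \<epsilon> x * sw b (\<lambda>u v. sw u (\<lambda>u1 u2. l (S u1 * u2 * S (y * v))))" for x y
    by (simp add: sw_commute[of x] sw_mult_const)
  then have "sw a (\<lambda>x y. sw x (\<lambda>x1 x2. sw b (\<lambda>u v. sw u (\<lambda>u1 u2.
      l (S u1 * S x1 * (x2 * u2) * S (y * v)))))) =
      sw b (\<lambda>u v. sw u (\<lambda>u1 u2. l (S u1 * u2 * S (a * v))))"
    using sw_counit_left[of "\<lambda>y. sw b (\<lambda>u v. sw u (\<lambda>u1 u2. l (S u1 * u2 * S (y * v))))" a]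
    by (simp add: lin_rules lc)
  also have "\<dots> = sw b (\<lambda>u v. \<epsilon> u * l (S (a * v)))"
  proof -
    have "sw u (\<lambda>u1 u2. l (S u1 * u2 * S (a * v))) = \<epsilon> u * l (S (a * v))" for u v
      using sw_antipode_left[of "\<lambda>h. l (h * S (a * v))" u] by (simp add: lin_rules lc)
    then show ?thesis by simp
  qed
  also have "\<dots> = l (S (a * b))"
    using sw_counit_left[of "\<lambda>v. l (S (a * v))" b] by (simp add: lin_rules lc)
  finally show ?thesis .
qed

lemma sw_antipode_mult_expand_right:
  assumes l: "lin l"
  shows "sw a (\<lambda>x y. sw y (\<lambda>y1 y2. sw b (\<lambda>u v. sw u (\<lambda>u1 u2.
            l (S u1 * S x * (y1 * u2) * S (y2 * v)))))) = l (S b * S a)"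
proof -
  note lc = lin_comp[OF l]
  have "sw b (\<lambda>u v. sw u (\<lambda>u1 u2. l (S u1 * S x * (y1 * u2) * S (y2 * v)))) =
      sw b (\<lambda>u v. sw v (\<lambda>v1 v2. l (S u * S x * (y1 * v1) * S (y2 * v2))))" for x y1 y2
  proof -
    have "trilin (\<lambda>u1 u2 v. l (S u1 * S x * (y1 * u2) * S (y2 * v)))" by (intro trilinI lin_rules lc)
    from sw_coassoc[OF this, of b] show ?thesis by simp
  qed
  moreover have "sw y (\<lambda>y1 y2. sw v (\<lambda>v1 v2. l (S u * S x * (y1 * v1) * S (y2 * v2)))) =
      \<epsilon> y * (\<epsilon> v * l (S u * S x))" for x y u v
  proof -
    have "bilin (\<lambda>p q. l (S u * S x * p * S q))" by (intro bilinI lin_rules lc)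
    from sw_mult[OF this, of y v, symmetric]
    show ?thesis
      using sw_antipode_right[of "\<lambda>h. l (S u * S x * h)" "y * v"]
      by (simp add: mult.assoc lin_rules lc counit_mult)
  qed
  ultimately have "sw y (\<lambda>y1 y2. sw b (\<lambda>u v. sw u (\<lambda>u1 u2. l (S u1 * S x * (y1 * u2) * S (y2 * v))))) =
      \<epsilon> y * l (S b * S x)" for x y
    using sw_counit_right[of "\<lambda>u. l (S u * S x)" b]
    by (simp add: sw_commute[of y] sw_mult_const lin_rules lc)
  then show ?thesis
    using sw_counit_right[of "\<lambda>x. l (S b * S x)" a] by (simp add: lin_rules lc)
qed

lemma antipode_mult: "S (a * b) = S b * S a"
proof (rule eq_if_lin_eq)
  fix l assume l: "lin l"
  have "trilin (\<lambda>x1 x2 y. sw b (\<lambda>u v. sw u (\<lambda>u1 u2. l (S u1 * S x1 * (x2 * u2) * S (y * v)))))"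
    by (intro trilinI lin_rules bilinI lin_comp[OF l])
  from sw_coassoc[OF this, of a] show "l (S (a * b)) = l (S b * S a)"
    using sw_antipode_mult_expand_left[OF l] sw_antipode_mult_expand_right[OF l] by simp
qed

lemma sw_antipode_nested:
  assumes \<phi>: "bilin \<phi>"
  shows "sw y (\<lambda>y1 y2. sw y1 (\<lambda>q1 q2. sw y2 (\<lambda>r1 r2. \<phi> (p1 * q1 * S r2) (p2 * q2 * S r1)))) =
         \<epsilon> y * \<phi> p1 p2"
proof -
  note \<phi>_lin = lin_bilin_left[OF \<phi>] lin_bilin_right[OF \<phi>]
  have "quadlin (\<lambda>q1 q2 r1 r2. \<phi> (p1 * q1 * S r2) (p2 * q2 * S r1))"
    by (intro quadlinI lin_rules \<phi>_lin)
  then have "sw y (\<lambda>y1 y2. sw y1 (\<lambda>q1 q2. sw y2 (\<lambda>r1 r2. \<phi> (p1 * q1 * S r2) (p2 * q2 * S r1)))) =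
      sw y (\<lambda>u r2. sw u (\<lambda>q1 w. sw w (\<lambda>q2 r1. \<phi> (p1 * q1 * S r2) (p2 * q2 * S r1))))"
    using sw_coassoc4_outer sw_coassoc4_inner by simp
  also have "\<dots> = sw y (\<lambda>u r2. sw u (\<lambda>q1 w. \<epsilon> w * \<phi> (p1 * q1 * S r2) p2))"
  proof -
    have "sw w (\<lambda>q2 r1. \<phi> (p1 * q1 * S r2) (p2 * q2 * S r1)) = \<epsilon> w * \<phi> (p1 * q1 * S r2) p2"
      for w q1 r2
      using sw_antipode_right[of "\<lambda>h. \<phi> (p1 * q1 * S r2) (p2 * h)" w]
      by (simp add: mult.assoc lin_rules \<phi>_lin)
    then show ?thesis by simp
  qed
  also have "\<dots> = sw y (\<lambda>u r2. \<phi> (p1 * u * S r2) p2)"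
  proof -
    have "sw u (\<lambda>q1 w. \<epsilon> w * \<phi> (p1 * q1 * S r2) p2) = \<phi> (p1 * u * S r2) p2" for u r2
      using sw_counit_right[of "\<lambda>q1. \<phi> (p1 * q1 * S r2) p2" u] by (simp add: lin_rules \<phi>_lin)
    then show ?thesis by simp
  qed
  also have "\<dots> = \<epsilon> y * \<phi> p1 p2"
    using sw_antipode_right[of "\<lambda>h. \<phi> (p1 * h) p2" y] by (simp add: mult.assoc lin_rules \<phi>_lin)
  finally show ?thesis .
qed

text \<open>
The next two lemmas evaluate Delta(S a1) Delta(a2) (S a4 (x) S a3) in two ways: S(a1) a2 = eps(a1) 1
turns it into S(a2) (x) S(a1), and a2 S(a5) (x) a3 S(a4) = eps(a2) 1 (x) 1 turns it into Delta(S a).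
\<close>

lemma sw_antipode_expand_left:
  assumes \<phi>: "bilin \<phi>"
  shows "sw a (\<lambda>x y. sw x (\<lambda>x1 x2. sw (S x1) (\<lambda>p1 p2. sw x2 (\<lambda>q1 q2. sw y (\<lambda>r1 r2.
            \<phi> (p1 * q1 * S r2) (p2 * q2 * S r1)))))) = sw a (\<lambda>x y. \<phi> (S y) (S x))"
proof -
  note \<phi>_lin = lin_bilin_left[OF \<phi>] lin_bilin_right[OF \<phi>]
  have "sw x (\<lambda>x1 x2. sw (S x1) (\<lambda>p1 p2. sw x2 (\<lambda>q1 q2. sw y (\<lambda>r1 r2.
      \<phi> (p1 * q1 * S r2) (p2 * q2 * S r1))))) = \<epsilon> x * sw y (\<lambda>r1 r2. \<phi> (S r2) (S r1))" for x y
  proof -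
    define \<Theta> where "\<Theta> = (\<lambda>u v. sw y (\<lambda>r1 r2. \<phi> (u * S r2) (v * S r1)))"
    have \<Theta>: "bilin \<Theta>" unfolding \<Theta>_def by (intro bilinI lin_rules \<phi>_lin)
    have "sw (S x1) (\<lambda>p1 p2. sw x2 (\<lambda>q1 q2. sw y (\<lambda>r1 r2. \<phi> (p1 * q1 * S r2) (p2 * q2 * S r1)))) =
        sw (S x1 * x2) \<Theta>" for x1 x2
      using sw_mult[OF \<Theta>, of "S x1" x2] by (simp add: \<Theta>_def)
    moreover have "sw x (\<lambda>x1 x2. sw (S x1 * x2) \<Theta>) = \<epsilon> x * sw 1 \<Theta>"
      using sw_antipode_left[OF lin_sw[OF \<Theta>]] .
    ultimately show ?thesis using sw_one[OF \<Theta>] by (simp add: \<Theta>_def)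
  qed
  then show ?thesis
    using sw_counit_left[of "\<lambda>y. sw y (\<lambda>r1 r2. \<phi> (S r2) (S r1))" a]
    by (simp add: lin_rules bilinI \<phi>_lin)
qed

lemma sw_antipode_expand_right:
  assumes \<phi>: "bilin \<phi>"
  shows "sw a (\<lambda>x y. sw y (\<lambda>y1 y2. sw (S x) (\<lambda>p1 p2. sw y1 (\<lambda>q1 q2. sw y2 (\<lambda>r1 r2.
            \<phi> (p1 * q1 * S r2) (p2 * q2 * S r1)))))) = sw (S a) \<phi>"
proof -
  have "sw y (\<lambda>y1 y2. sw (S x) (\<lambda>p1 p2. sw y1 (\<lambda>q1 q2. sw y2 (\<lambda>r1 r2.
      \<phi> (p1 * q1 * S r2) (p2 * q2 * S r1))))) = \<epsilon> y * sw (S x) \<phi>" for x y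
    by (simp add: sw_commute[of y] sw_antipode_nested[OF \<phi>] sw_mult_const)
  then show ?thesis
    using sw_counit_right[of "\<lambda>x. sw (S x) \<phi>" a] \<phi> by (simp add: lin_rules)
qed

lemma sw_antipode_op: "bilin \<phi> \<Longrightarrow> sw (S a) \<phi> = sw a (\<lambda>x y. \<phi> (S y) (S x))"
proof -
  assume \<phi>: "bilin \<phi>"
  note \<phi>_lin = lin_bilin_left[OF \<phi>] lin_bilin_right[OF \<phi>]
  have "trilin (\<lambda>x1 x2 y. sw (S x1) (\<lambda>p1 p2. sw x2 (\<lambda>q1 q2. sw y (\<lambda>r1 r2.
      \<phi> (p1 * q1 * S r2) (p2 * q2 * S r1)))))"
    by (intro trilinI bilinI lin_rules \<phi>_lin)
  from sw_coassoc[OF this, of a] show ?thesis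
    using sw_antipode_expand_left[OF \<phi>] sw_antipode_expand_right[OF \<phi>] by simp
qed

lemma sw_antipode: "bilin \<phi> \<Longrightarrow> sw (S a) \<phi> = sw a (\<lambda>x y. \<phi> (S x) (S y))"
proof -
  assume \<phi>: "bilin \<phi>"
  then have "bilin (\<lambda>x y. \<phi> (S y) (S x))"
    by (intro bilinI lin_rules lin_bilin_left[OF \<phi>] lin_bilin_right[OF \<phi>])
  from sw_antipode_op[OF \<phi>, of a] sw_cocomm[OF this, of a] show ?thesis by (rule trans)
qed

lemma lin_endo_coalg_hom: "coalg_hom sH \<Delta> \<epsilon> B \<Longrightarrow> lin_endo B"
  by (simp add: coalg_hom_def lin_endo_iff)

lemma conv_coalg_hom_eq:
  assumes A: "comm_k_algebra sA"
    and f: "f \<in> carrier (CharH sH \<Delta> \<epsilon> sA)" and g: "g \<in> carrier (CharH sH \<Delta> \<epsilon> sA)"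
    and B: "coalg_hom sH \<Delta> \<epsilon> B" and T: "teq2 sH T (\<Delta> a)"
  shows "sum_list (map (\<lambda>(x, y). f (B x) * g (B y)) T) = conv \<Delta> f g (B a)"
proof (rule vector_space.eq_if_linear_functionals_eq)
  show "vector_space sA" using A by (simp add: comm_k_algebra_def k_algebra_def)
  fix l assume l: "Vector_Spaces.linear sA (*) l"
  then have l_add: "l (x + y) = l x + l y" and l_scale: "l (sA c x) = c * l x" for x y c
    by (simp_all add: Vector_Spaces.linear_iff)
  have fg: "f (x + y) = f x + f y" "f (sH c x) = sA c (f x)"
           "g (x + y) = g x + g y" "g (sH c x) = sA c (g x)" for x y c
    using f g by (simp_all add: CharH_def Vector_Spaces.linear_iff)
  have scale_A: "sA c x * y = sA c (x * y)" "x * sA c y = sA c (x * y)" for c x y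
    using A by (metis comm_k_algebra_def k_algebra_def)+
  define \<psi> where "\<psi> = (\<lambda>x y. l (f x * g y))"
  have \<psi>: "bilin \<psi>" unfolding \<psi>_def
    by (intro bilinI linI) (simp_all add: fg distrib_left distrib_right l_add l_scale scale_A)
  have \<psi>B: "bilin (\<lambda>x y. \<psi> (B x) (B y))"
    using lin_endo_coalg_hom[OF B] by (intro bilinI lin_bilin_left[OF \<psi>] lin_bilin_right[OF \<psi>])
  have "l (sum_list (map (\<lambda>(x, y). f (B x) * g (B y)) T)) = sum_list (map (\<lambda>(x, y). \<psi> (B x) (B y)) T)"
    by (simp add: additive_sum_list_pairs[of l, OF l_add] \<psi>_def)
  also have "\<dots> = sw a (\<lambda>x y. \<psi> (B x) (B y))"
    unfolding sw_def by (rule teq2_sum_list_eq[OF T \<psi>B])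
  also have "\<dots> = sw (B a) \<psi>"
    by (rule sw_coalg_hom[OF B \<psi>, symmetric])
  also have "\<dots> = l (conv \<Delta> f g (B a))"
    by (simp add: additive_sum_list_pairs[of l, OF l_add] conv_def sw_def \<psi>_def)
  finally show "l (sum_list (map (\<lambda>(x, y). f (B x) * g (B y)) T)) = l (conv \<Delta> f g (B a))" .
qed

end

locale rota_baxter_hopf = cocomm_hopf sH \<Delta> \<epsilon> S
  for sH :: "'k::field_char_0 \<Rightarrow> 'h::ring_1 \<Rightarrow> 'h" and \<Delta> \<epsilon> S +
  fixes B1 B2 :: "'h \<Rightarrow> 'h"
  assumes rota_baxter: "rota_baxter_system sH \<Delta> \<epsilon> S B1 B2"
begin

abbreviation desc :: "'h \<Rightarrow> 'h \<Rightarrow> 'h" (infixl "\<cdot>" 70) where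
  "a \<cdot> b \<equiv> desc_op \<Delta> S B1 B2 a b"

abbreviation \<sigma> :: "'h \<Rightarrow> 'h" where
  "\<sigma> \<equiv> cocycle \<Delta> S B1 B2"

lemma
  shows B1_coalg_hom: "coalg_hom sH \<Delta> \<epsilon> B1" and B2_coalg_hom: "coalg_hom sH \<Delta> \<epsilon> B2"
    and B1_one: "B1 1 = 1" and B2_one: "B2 1 = 1"
    and B1_desc: "B1 (a \<cdot> b) = B1 a * B1 b" and B2_desc: "B2 (a \<cdot> b) = B2 a * B2 b"
  using rota_baxter by (simp_all add: rota_baxter_system_def)

lemma lin_endo_B1_comp: "lin_endo g \<Longrightarrow> lin_endo (\<lambda>x. B1 (g x))"
  and lin_endo_B2_comp: "lin_endo g \<Longrightarrow> lin_endo (\<lambda>x. B2 (g x))"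
  using lin_endo_coalg_hom[OF B1_coalg_hom] lin_endo_coalg_hom[OF B2_coalg_hom]
  by (simp_all add: lin_endo_def)

lemmas lin_rules_rb = lin_rules lin_endo_B1_comp lin_endo_B2_comp

lemma lin_desc: "lin l \<Longrightarrow> l (a \<cdot> c) = sw a (\<lambda>x y. l (B1 x * c * S (B2 y)))"
  unfolding desc_op_def by (rule lin_sw_sum)

lemma lin_cocycle: "lin l \<Longrightarrow> l (\<sigma> a) = sw a (\<lambda>x y. l (B1 x * S (B2 y)))"
  unfolding cocycle_def by (rule lin_sw_sum)

lemma cocycle_eq_desc_one: "\<sigma> a = a \<cdot> 1"
  by (simp add: cocycle_def desc_op_def)

lemma lin_endo_desc_left: "lin_endo (\<lambda>a. a \<cdot> c)"
proof (rule lin_endo_if_lin_comp)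
  fix l assume "lin l"
  then show "lin (\<lambda>a. l (a \<cdot> c))"
    unfolding lin_desc[OF \<open>lin l\<close>] by (intro lin_sw bilinI lin_rules_rb lin_comp[OF \<open>lin l\<close>])
qed

lemma lin_endo_desc_right: "lin_endo g \<Longrightarrow> lin_endo (\<lambda>x. a \<cdot> g x)"
proof (rule lin_endo_if_lin_comp)
  fix l assume "lin l" "lin_endo g"
  then show "lin (\<lambda>x. l (a \<cdot> g x))"
    unfolding lin_desc[OF \<open>lin l\<close>] by (intro lin_rules_rb lin_comp[OF \<open>lin l\<close>])
qed

lemma lin_endo_cocycle: "lin_endo \<sigma>"
proof -
  have "\<sigma> = (\<lambda>a. a \<cdot> 1)" by (rule ext) (rule cocycle_eq_desc_one)
  then show ?thesis using lin_endo_desc_left by simp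
qed

lemma sw_desc_summand:
  assumes \<phi>: "bilin \<phi>"
  shows "sw (B1 x * c * S (B2 y)) \<phi> = sw x (\<lambda>x1 x2. sw y (\<lambda>y1 y2. sw c (\<lambda>q1 q2.
           \<phi> (B1 x1 * q1 * S (B2 y1)) (B1 x2 * q2 * S (B2 y2)))))"
proof -
  note \<phi>_lin = lin_bilin_left[OF \<phi>] lin_bilin_right[OF \<phi>]
  have F: "bilin (\<lambda>p1 p2. sw (S (B2 y)) (\<lambda>r1 r2. \<phi> (p1 * r1) (p2 * r2)))"
    and G: "bilin (\<lambda>s1 s2. sw c (\<lambda>q1 q2. sw (S (B2 y)) (\<lambda>r1 r2. \<phi> (s1 * q1 * r1) (s2 * q2 * r2))))"
    by (intro bilinI lin_rules_rb \<phi>_lin)+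
  have "sw (B1 x * c * S (B2 y)) \<phi> = sw (B1 x * c) (\<lambda>p1 p2. sw (S (B2 y)) (\<lambda>r1 r2. \<phi> (p1 * r1) (p2 * r2)))"
    by (rule sw_mult[OF \<phi>])
  also have "\<dots> = sw x (\<lambda>x1 x2. sw c (\<lambda>q1 q2. sw (S (B2 y)) (\<lambda>r1 r2.
      \<phi> (B1 x1 * q1 * r1) (B1 x2 * q2 * r2))))"
    using sw_mult[OF F] sw_coalg_hom[OF B1_coalg_hom G] by (simp add: mult.assoc)
  also have "\<dots> = sw x (\<lambda>x1 x2. sw c (\<lambda>q1 q2. sw y (\<lambda>y1 y2.
      \<phi> (B1 x1 * q1 * S (B2 y1)) (B1 x2 * q2 * S (B2 y2)))))"
  proof -
    have "sw (S (B2 y)) (\<lambda>r1 r2. \<phi> (B1 x1 * q1 * r1) (B1 x2 * q2 * r2)) =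
        sw y (\<lambda>y1 y2. \<phi> (B1 x1 * q1 * S (B2 y1)) (B1 x2 * q2 * S (B2 y2)))" for x1 x2 q1 q2
    proof -
      have "bilin (\<lambda>r1 r2. \<phi> (B1 x1 * q1 * r1) (B1 x2 * q2 * r2))"
        and "bilin (\<lambda>z1 z2. \<phi> (B1 x1 * q1 * S z1) (B1 x2 * q2 * S z2))"
        by (intro bilinI lin_rules_rb \<phi>_lin)+
      then show ?thesis by (simp add: sw_antipode sw_coalg_hom[OF B2_coalg_hom])
    qed
    then show ?thesis by simp
  qed
  also have "\<dots> = sw x (\<lambda>x1 x2. sw y (\<lambda>y1 y2. sw c (\<lambda>q1 q2.
      \<phi> (B1 x1 * q1 * S (B2 y1)) (B1 x2 * q2 * S (B2 y2)))))"
    by (simp only: sw_commute[of c])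
  finally show ?thesis .
qed

lemma sw_desc:
  assumes \<phi>: "bilin \<phi>"
  shows "sw (a \<cdot> c) \<phi> = sw a (\<lambda>x y. sw c (\<lambda>u v. \<phi> (x \<cdot> u) (y \<cdot> v)))"
proof -
  note \<phi>_lin = lin_bilin_left[OF \<phi>] lin_bilin_right[OF \<phi>]
  define \<Phi> where "\<Phi> = (\<lambda>x1 x2 y1 y2. sw c (\<lambda>q1 q2. \<phi> (B1 x1 * q1 * S (B2 y1)) (B1 x2 * q2 * S (B2 y2))))"
  have \<Phi>: "quadlin \<Phi>" unfolding \<Phi>_def by (intro quadlinI lin_rules_rb bilinI \<phi>_lin)
  have "sw (a \<cdot> c) \<phi> = sw a (\<lambda>x y. sw x (\<lambda>x1 x2. sw y (\<lambda>y1 y2. \<Phi> x1 x2 y1 y2)))"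
    unfolding desc_op_def by (simp add: lin_sw_sum[OF lin_sw[OF \<phi>]] sw_desc_summand[OF \<phi>] \<Phi>_def)
  also have "\<dots> = sw a (\<lambda>x y. sw x (\<lambda>x1 x2. sw y (\<lambda>y1 y2. \<Phi> x1 y1 x2 y2)))"
    by (rule sw_cocomm_swap_middle[OF \<Phi>])
  also have "\<dots> = sw a (\<lambda>x y. sw c (\<lambda>u v. \<phi> (x \<cdot> u) (y \<cdot> v)))"
  proof -
    have "\<phi> (x \<cdot> u) (y \<cdot> v) =
        sw x (\<lambda>x1 x2. sw y (\<lambda>y1 y2. \<phi> (B1 x1 * u * S (B2 x2)) (B1 y1 * v * S (B2 y2))))" for x y u v
      unfolding lin_desc[OF lin_bilin_left[OF \<phi> lin_endo_id], of x u "y \<cdot> v"]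
      by (simp add: lin_desc[OF lin_bilin_right[OF \<phi> lin_endo_id], of _ y v])
    then show ?thesis unfolding \<Phi>_def by (simp add: sw_commute[of c])
  qed
  finally show ?thesis .
qed

lemma sw_cocycle:
  assumes \<phi>: "bilin \<phi>"
  shows "sw (\<sigma> a) \<phi> = sw a (\<lambda>x y. \<phi> (\<sigma> x) (\<sigma> y))"
proof -
  have "bilin (\<lambda>u v. \<phi> (x \<cdot> u) (y \<cdot> v))" for x y
    by (intro bilinI lin_bilin_left[OF \<phi>] lin_bilin_right[OF \<phi>] lin_endo_desc_right lin_endo_id)
  then show ?thesis by (simp add: cocycle_eq_desc_one sw_desc[OF \<phi>] sw_one)
qed

lemma B1_cocycle: "B1 (\<sigma> a) = B1 a"
  and B2_cocycle: "B2 (\<sigma> a) = B2 a"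
  by (simp_all add: cocycle_eq_desc_one B1_desc B1_one B2_desc B2_one)

lemma desc_cocycle_left: "\<sigma> a \<cdot> c = a \<cdot> c"
proof (rule eq_if_lin_eq)
  fix l assume l: "lin l"
  have "bilin (\<lambda>x y. l (B1 x * c * S (B2 y)))" by (intro bilinI lin_rules_rb lin_comp[OF l])
  then show "l (\<sigma> a \<cdot> c) = l (a \<cdot> c)"
    by (simp add: lin_desc[OF l] sw_cocycle B1_cocycle B2_cocycle)
qed

lemma desc_cocycle_right: "a \<cdot> \<sigma> b = \<sigma> (a \<cdot> b)"
proof (rule eq_if_lin_eq)
  fix l assume l: "lin l"
  have "bilin (\<lambda>x y. l (B1 x * S (B2 y)))" by (intro bilinI lin_rules_rb lin_comp[OF l])
  then have "l (\<sigma> (a \<cdot> b)) = sw a (\<lambda>x y. sw b (\<lambda>u v. l (B1 (x \<cdot> u) * S (B2 (y \<cdot> v)))))"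
    by (simp add: lin_cocycle[OF l] sw_desc)
  also have "\<dots> = sw a (\<lambda>x y. sw b (\<lambda>u v. l (B1 x * (B1 u * S (B2 v)) * S (B2 y))))"
    by (simp add: B1_desc B2_desc antipode_mult mult.assoc)
  also have "\<dots> = l (a \<cdot> \<sigma> b)"
  proof -
    have "l (B1 x * \<sigma> b * S (B2 y)) = sw b (\<lambda>u v. l (B1 x * (B1 u * S (B2 v)) * S (B2 y)))" for x y
      using lin_sw_sum[of "\<lambda>h. l (B1 x * h * S (B2 y))" "\<lambda>u v. B1 u * S (B2 v)" b]
      by (simp add: cocycle_def lin_rules_rb lin_comp[OF l])
    then show ?thesis by (simp add: lin_desc[OF l])
  qed
  finally show "l (a \<cdot> \<sigma> b) = l (\<sigma> (a \<cdot> b))" by simp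
qed

lemma desc_in_H1: "x \<in> H1 \<Delta> S B1 B2 \<Longrightarrow> y \<in> H1 \<Delta> S B1 B2 \<Longrightarrow> x \<cdot> y \<in> H1 \<Delta> S B1 B2"
  unfolding H1_def by (auto simp: desc_cocycle_left desc_cocycle_right)

lemma add_in_H1: "x \<in> H1 \<Delta> S B1 B2 \<Longrightarrow> y \<in> H1 \<Delta> S B1 B2 \<Longrightarrow> x + y \<in> H1 \<Delta> S B1 B2"
  unfolding H1_def by (auto simp flip: lin_endo_add[OF lin_endo_cocycle])

lemma scale_in_H1: "x \<in> H1 \<Delta> S B1 B2 \<Longrightarrow> sH c x \<in> H1 \<Delta> S B1 B2"
  unfolding H1_def by (auto simp flip: lin_endo_scale[OF lin_endo_cocycle])

lemma one_in_H1: "1 \<in> H1 \<Delta> S B1 B2"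
proof -
  have "\<sigma> 1 = 1"
  proof (rule eq_if_lin_eq)
    fix l assume l: "lin l"
    have "bilin (\<lambda>x y. l (B1 x * S (B2 y)))" by (intro bilinI lin_rules_rb lin_comp[OF l])
    then show "l (\<sigma> 1) = l 1" by (simp add: lin_cocycle[OF l] sw_one B1_one B2_one antipode_one)
  qed
  then show ?thesis unfolding H1_def by (metis rangeI)
qed

lemma coproduct_in_H1:
  assumes "a \<in> H1 \<Delta> S B1 B2"
  obtains T where "set T \<subseteq> H1 \<Delta> S B1 B2 \<times> H1 \<Delta> S B1 B2" "teq2 sH T (\<Delta> a)"
proof -
  obtain c where a: "a = \<sigma> c" using assms unfolding H1_def by blast
  let ?T = "map (\<lambda>(x, y). (\<sigma> x, \<sigma> y)) (\<Delta> c)"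
  have "set ?T \<subseteq> H1 \<Delta> S B1 B2 \<times> H1 \<Delta> S B1 B2" unfolding H1_def by auto
  moreover have "teq2 sH ?T (\<Delta> a)"
    unfolding teq2_def bilin_fun_iff a sum_list_pairs_map using sw_cocycle unfolding sw_def by simp
  ultimately show ?thesis using that by blast
qed

lemma BChar_in_CharHB:
  assumes f: "f \<in> carrier (CharH sH \<Delta> \<epsilon> sA)"
    and B: "lin_endo B" "B 1 = 1" "\<And>a b. B (a \<cdot> b) = B a * B b"
  shows "BChar \<Delta> S B1 B2 B f \<in> carrier (CharHB sH \<Delta> \<epsilon> S B1 B2 sA)"
proof -
  have "f (x + y) = f x + f y" "f (sH c x) = sA c (f x)" "f (x * y) = f x * f y" "f 1 = 1" for x y c
    using f by (simp_all add: CharH_def Vector_Spaces.linear_iff)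
  then show ?thesis
    using add_in_H1 scale_in_H1 desc_in_H1 one_in_H1
    by (simp add: CharHB_def BChar_def B lin_endo_add[OF B(1)] lin_endo_scale[OF B(1)])
qed

lemma convB_BChar:
  assumes A: "comm_k_algebra sA"
    and f: "f \<in> carrier (CharH sH \<Delta> \<epsilon> sA)" and g: "g \<in> carrier (CharH sH \<Delta> \<epsilon> sA)"
    and B: "coalg_hom sH \<Delta> \<epsilon> B" and a: "a \<in> H1 \<Delta> S B1 B2"
  shows "convB sH \<Delta> S B1 B2 (BChar \<Delta> S B1 B2 B f) (BChar \<Delta> S B1 B2 B g) a = conv \<Delta> f g (B a)"
proof -
  have sum_eq: "sum_list (map (\<lambda>(x, y). BChar \<Delta> S B1 B2 B f x * BChar \<Delta> S B1 B2 B g y) T) =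
      conv \<Delta> f g (B a)"
    if T: "set T \<subseteq> H1 \<Delta> S B1 B2 \<times> H1 \<Delta> S B1 B2" "teq2 sH T (\<Delta> a)" for T
  proof -
    have "sum_list (map (\<lambda>(x, y). BChar \<Delta> S B1 B2 B f x * BChar \<Delta> S B1 B2 B g y) T) =
        sum_list (map (\<lambda>(x, y). f (B x) * g (B y)) T)"
      using T(1) by (induction T) (auto simp: BChar_def)
    with conv_coalg_hom_eq[OF A f g B T(2)] show ?thesis by simp
  qed
  let ?P = "\<lambda>v. \<exists>T. set T \<subseteq> H1 \<Delta> S B1 B2 \<times> H1 \<Delta> S B1 B2 \<and> teq2 sH T (\<Delta> a) \<and>
      v = sum_list (map (\<lambda>(x, y). BChar \<Delta> S B1 B2 B f x * BChar \<Delta> S B1 B2 B g y) T)"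
  obtain T where "set T \<subseteq> H1 \<Delta> S B1 B2 \<times> H1 \<Delta> S B1 B2" "teq2 sH T (\<Delta> a)"
    using coproduct_in_H1[OF a] .
  then have "\<exists>v. ?P v" by blast
  then have "Eps ?P = conv \<Delta> f g (B a)"
    by (rule someI2_ex) (use sum_eq in blast)
  with a show ?thesis by (simp add: convB_def)
qed

lemma BChar_hom:
  assumes A: "comm_k_algebra sA"
    and B: "coalg_hom sH \<Delta> \<epsilon> B" "B 1 = 1" "\<And>a b. B (a \<cdot> b) = B a * B b"
  shows "BChar \<Delta> S B1 B2 B \<in> hom (CharH sH \<Delta> \<epsilon> sA) (CharHB sH \<Delta> \<epsilon> S B1 B2 sA)"
proof (rule homI)
  fix f assume "f \<in> carrier (CharH sH \<Delta> \<epsilon> sA)"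
  with lin_endo_coalg_hom[OF B(1)] B(2,3)
  show "BChar \<Delta> S B1 B2 B f \<in> carrier (CharHB sH \<Delta> \<epsilon> S B1 B2 sA)"
    by (rule BChar_in_CharHB[rotated])
next
  fix f g
  assume f: "f \<in> carrier (CharH sH \<Delta> \<epsilon> sA)" and g: "g \<in> carrier (CharH sH \<Delta> \<epsilon> sA)"
  have "BChar \<Delta> S B1 B2 B (conv \<Delta> f g) a =
      convB sH \<Delta> S B1 B2 (BChar \<Delta> S B1 B2 B f) (BChar \<Delta> S B1 B2 B g) a" for a
  proof (cases "a \<in> H1 \<Delta> S B1 B2")
    case True
    with convB_BChar[OF A f g B(1) True] show ?thesis by (simp add: BChar_def)
  next
    case False
    then show ?thesis by (simp add: BChar_def convB_def)
  qed
  then show "BChar \<Delta> S B1 B2 B (f \<otimes>\<^bsub>CharH sH \<Delta> \<epsilon> sA\<^esub> g) =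
      BChar \<Delta> S B1 B2 B f \<otimes>\<^bsub>CharHB sH \<Delta> \<epsilon> S B1 B2 sA\<^esub> BChar \<Delta> S B1 B2 B g"
    by (auto simp: CharH_def CharHB_def)
qed

end

theorem mainTheorem11:
  fixes sH :: "'k::field_char_0 \<Rightarrow> 'h::ring_1 \<Rightarrow> 'h"
    and \<Delta> :: "'h \<Rightarrow> ('h \<times> 'h) list" and \<epsilon> :: "'h \<Rightarrow> 'k"
    and S B1 B2 :: "'h \<Rightarrow> 'h"
    and sA :: "'k \<Rightarrow> 'a::comm_ring_1 \<Rightarrow> 'a"
  assumes "rota_baxter_system sH \<Delta> \<epsilon> S B1 B2"
    and "comm_k_algebra sA"
  shows "BChar \<Delta> S B1 B2 B1 \<in> hom (CharH sH \<Delta> \<epsilon> sA) (CharHB sH \<Delta> \<epsilon> S B1 B2 sA) \<and>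
         BChar \<Delta> S B1 B2 B2 \<in> hom (CharH sH \<Delta> \<epsilon> sA) (CharHB sH \<Delta> \<epsilon> S B1 B2 sA)"
proof -
  have "rota_baxter_hopf sH \<Delta> \<epsilon> S B1 B2"
    using assms(1) by (simp add: rota_baxter_hopf_def rota_baxter_hopf_axioms_def cocomm_hopf_def
        rota_baxter_system_def)
  then interpret rota_baxter_hopf sH \<Delta> \<epsilon> S B1 B2 .
  show ?thesis
    using BChar_hom[OF assms(2) B1_coalg_hom B1_one B1_desc]
      BChar_hom[OF assms(2) B2_coalg_hom B2_one B2_desc] by blast
qed

end
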